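(* Let $W$ be a graphon on a probability space $J=(\Omega,\mathcal A,\mu)$ and let $(\nu_x)_{x\in J}$, $\nu_x=W(x,\cdot)\,d\mu$, be the associated graphop. Then: every graphon automorphism of $W$ is a graphop automorphism of $(\nu_x)$; a graphop automorphism $\varphi$ of $(\nu_x)$ is a graphon automorphism of $W$ if and only if it preserves $\mu$; in particular, the graphon-induced symmetries are exactly the graphop-induced symmetries that are isometries of $L^1(J)$.
   Context: A graphon is a symmetric measurable $W:\Omega\times\Omega\to[0,1]$. A graphon automorphism is an invertible measure preserving $\varphi:J\to J$ with $W(\varphi(x),\varphi(y))=W(x,y)$ for every $x$ and almost every $y$. A graphop automorphism of a graphop with fiber measures $(\nu_x)$ is a measurable bijection $\varphi$ with $\varphi\#\nu_x=\nu_{\varphi(x)}$ for every $x$. The graphon-induced (resp. graphop-induced) symmetry associated to a graphon (resp. graphop) automorphism $\varphi$ is the map $\varphi^*:L^1(J)\to L^1(J)$, $u\mapsto u\circ\varphi$. *)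

theory Defs
  imports "HOL-Probability.Probability"
begin

definition graphon :: "'a measure \<Rightarrow> ('a \<Rightarrow> 'a \<Rightarrow> real) \<Rightarrow> bool" where
  "graphon M W \<longleftrightarrow> prob_space M \<and>
     (\<lambda>(x, y). W x y) \<in> borel_measurable (M \<Otimes>\<^sub>M M) \<and>
     (\<forall>x\<in>space M. \<forall>y\<in>space M. W x y = W y x \<and> 0 \<le> W x y \<and> W x y \<le> 1)"

definition graphop_of :: "'a measure \<Rightarrow> ('a \<Rightarrow> 'a \<Rightarrow> real) \<Rightarrow> 'a \<Rightarrow> 'a measure" where
  "graphop_of M W x = density M (\<lambda>y. ennreal (W x y))"

definition invertible_measure_preserving :: "'a measure \<Rightarrow> ('a \<Rightarrow> 'a) \<Rightarrow> bool" where
  "invertible_measure_preserving M \<phi> \<longleftrightarrow>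
     bij_betw \<phi> (space M) (space M) \<and> \<phi> \<in> M \<rightarrow>\<^sub>M M \<and>
     the_inv_into (space M) \<phi> \<in> M \<rightarrow>\<^sub>M M \<and> distr M M \<phi> = M"

definition graphon_aut :: "'a measure \<Rightarrow> ('a \<Rightarrow> 'a \<Rightarrow> real) \<Rightarrow> ('a \<Rightarrow> 'a) \<Rightarrow> bool" where
  "graphon_aut M W \<phi> \<longleftrightarrow> invertible_measure_preserving M \<phi> \<and>
     (\<forall>x\<in>space M. AE y in M. W (\<phi> x) (\<phi> y) = W x y)"

text \<open>Measurable bijection (read as: bimeasurable bijection of the space).\<close>
definition measurable_bijection :: "'a measure \<Rightarrow> ('a \<Rightarrow> 'a) \<Rightarrow> bool" where
  "measurable_bijection M \<phi> \<longleftrightarrow>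
     bij_betw \<phi> (space M) (space M) \<and> \<phi> \<in> M \<rightarrow>\<^sub>M M \<and>
     the_inv_into (space M) \<phi> \<in> M \<rightarrow>\<^sub>M M"

definition graphop_aut :: "'a measure \<Rightarrow> ('a \<Rightarrow> 'a measure) \<Rightarrow> ('a \<Rightarrow> 'a) \<Rightarrow> bool" where
  "graphop_aut M \<nu> \<phi> \<longleftrightarrow> measurable_bijection M \<phi> \<and>
     (\<forall>x\<in>space M. distr (\<nu> x) M \<phi> = \<nu> (\<phi> x))"

definition induced_sym :: "('a \<Rightarrow> 'a) \<Rightarrow> ('a \<Rightarrow> real) \<Rightarrow> ('a \<Rightarrow> real)" where
  "induced_sym \<phi> u = u \<circ> \<phi>"

definition L1_isometry :: "'a measure \<Rightarrow> (('a \<Rightarrow> real) \<Rightarrow> ('a \<Rightarrow> real)) \<Rightarrow> bool" where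
  "L1_isometry M T \<longleftrightarrow> (\<forall>u. integrable M u \<longrightarrow>
     integrable M (T u) \<and> (\<integral>x. \<bar>T u x\<bar> \<partial>M) = (\<integral>x. \<bar>u x\<bar> \<partial>M))"

end

theory Submission
  imports Defs
begin

text \<open>A bimeasurable bijection \<open>\<phi>\<close> that preserves \<open>\<mu>\<close> pushes the density
  \<open>W(\<phi> x, \<phi> \<cdot>)\<close> forward to \<open>W(\<phi> x, \<cdot>)\<close>; since pushing forward along \<open>\<phi>\<close> is injective,
  \<open>\<phi>\<^sub>#\<nu>\<^sub>x = \<nu>\<^bsub>\<phi> x\<^esub>\<close> says that \<open>W(x, \<cdot>)\<close> and \<open>W(\<phi> x, \<phi> \<cdot>)\<close> are densities of the same
  measure, i.e. agree almost everywhere. So a graphop automorphism is a graphon automorphism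
  exactly when it preserves \<open>\<mu>\<close>, and for \<open>u \<mapsto> u \<circ> \<phi>\<close> measure preservation is equivalent
  to being an \<open>L\<^sup>1\<close>-isometry: test the isometry on indicator functions.\<close>

lemma graphon_measurable_section:
  assumes "graphon M W" "x \<in> space M"
  shows "W x \<in> borel_measurable M"
proof -
  have "(\<lambda>(x, y). W x y) \<in> borel_measurable (M \<Otimes>\<^sub>M M)"
    using assms(1) unfolding graphon_def by auto
  from measurable_Pair2[OF this assms(2)] show ?thesis by simp
qed

lemma invertible_measure_preserving_iff:
  "invertible_measure_preserving M \<phi> \<longleftrightarrow> measurable_bijection M \<phi> \<and> distr M M \<phi> = M"
  unfolding invertible_measure_preserving_def measurable_bijection_def by auto

lemma measurable_bijection_apply:
  "measurable_bijection M \<phi> \<Longrightarrow> x \<in> space M \<Longrightarrow> \<phi> x \<in> space M"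
  unfolding measurable_bijection_def by (auto dest: bij_betw_apply)

lemma distr_density_comp_measure_preserving:
  assumes [measurable]: "\<phi> \<in> M \<rightarrow>\<^sub>M M" "f \<in> borel_measurable M" and preserving: "distr M M \<phi> = M"
  shows "distr (density M (\<lambda>y. f (\<phi> y))) M \<phi> = density M f"
proof -
  have "distr (density M (\<lambda>y. f (\<phi> y))) M \<phi> = density (distr M M \<phi>) f"
    by (rule density_distr[symmetric]) auto
  then show ?thesis unfolding preserving .
qed

lemma measurable_bijection_distr_inj:
  assumes bij: "measurable_bijection M \<phi>" and sets: "sets N = sets M" "sets N' = sets M"
    and eq: "distr N M \<phi> = distr N' M \<phi>"
  shows "N = N'"
proof -
  let ?\<psi> = "the_inv_into (space M) \<phi>"
  have \<phi>: "\<phi> \<in> M \<rightarrow>\<^sub>M M" and \<psi>: "?\<psi> \<in> M \<rightarrow>\<^sub>M M" and inj: "inj_on \<phi> (space M)"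
    using bij unfolding measurable_bijection_def bij_betw_def by auto
  have undo: "distr (distr K M \<phi>) M ?\<psi> = K" if K: "sets K = sets M" for K
  proof -
    have "\<phi> \<in> K \<rightarrow>\<^sub>M M" using \<phi> measurable_cong_sets[OF K refl[of "sets M"]] by simp
    then have "distr (distr K M \<phi>) M ?\<psi> = distr K M (?\<psi> \<circ> \<phi>)"
      using \<psi> by (rule distr_distr[rotated])
    also have "\<dots> = distr K K (\<lambda>y. y)"
      using K inj sets_eq_imp_space_eq[OF K] by (intro distr_cong) (simp_all add: the_inv_into_f_f)
    finally show ?thesis by simp
  qed
  from eq have "distr (distr N M \<phi>) M ?\<psi> = distr (distr N' M \<phi>) M ?\<psi>" by simp
  then show ?thesis unfolding undo[OF sets(1)] undo[OF sets(2)] .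
qed

lemma graphop_distr_iff_AE_graphon:
  assumes G: "graphon M W" and bij: "measurable_bijection M \<phi>" and preserving: "distr M M \<phi> = M"
    and x: "x \<in> space M"
  shows "distr (graphop_of M W x) M \<phi> = graphop_of M W (\<phi> x)
    \<longleftrightarrow> (AE y in M. W (\<phi> x) (\<phi> y) = W x y)"
proof -
  have [measurable]: "\<phi> \<in> M \<rightarrow>\<^sub>M M"
    using bij unfolding measurable_bijection_def by auto
  interpret prob_space M using G unfolding graphon_def by auto
  have \<phi>x: "\<phi> x \<in> space M" using measurable_bijection_apply[OF bij x] .
  note [measurable] = graphon_measurable_section[OF G x] graphon_measurable_section[OF G \<phi>x]
  have nonneg: "0 \<le> W u v" if "u \<in> space M" "v \<in> space M" for u v
    using G that unfolding graphon_def by auto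
  have target: "density M (\<lambda>y. ennreal (W (\<phi> x) y))
      = distr (density M (\<lambda>y. ennreal (W (\<phi> x) (\<phi> y)))) M \<phi>"
    by (rule distr_density_comp_measure_preserving[symmetric]) (auto simp: preserving)
  have "distr (graphop_of M W x) M \<phi> = graphop_of M W (\<phi> x)
      \<longleftrightarrow> density M (\<lambda>y. ennreal (W x y)) = density M (\<lambda>y. ennreal (W (\<phi> x) (\<phi> y)))"
    unfolding graphop_of_def target
  proof
    assume "distr (density M (\<lambda>y. ennreal (W x y))) M \<phi>
      = distr (density M (\<lambda>y. ennreal (W (\<phi> x) (\<phi> y)))) M \<phi>"
    then show "density M (\<lambda>y. ennreal (W x y)) = density M (\<lambda>y. ennreal (W (\<phi> x) (\<phi> y)))"
      by (rule measurable_bijection_distr_inj[OF bij, rotated 2]) simp_all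
  qed simp
  also have "\<dots> \<longleftrightarrow> (AE y in M. ennreal (W x y) = ennreal (W (\<phi> x) (\<phi> y)))"
    by (rule density_unique_iff) auto
  also have "\<dots> \<longleftrightarrow> (AE y in M. W (\<phi> x) (\<phi> y) = W x y)"
  proof (rule AE_cong)
    fix y assume y: "y \<in> space M"
    have "0 \<le> W x y" "0 \<le> W (\<phi> x) (\<phi> y)"
      using nonneg x \<phi>x y measurable_bijection_apply[OF bij y] by blast+
    then show "ennreal (W x y) = ennreal (W (\<phi> x) (\<phi> y)) \<longleftrightarrow> W (\<phi> x) (\<phi> y) = W x y"
      by auto
  qed
  finally show ?thesis .
qed

lemma L1_isometry_induced_sym_iff:
  assumes "finite_measure M" and [measurable]: "\<phi> \<in> M \<rightarrow>\<^sub>M M"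
  shows "L1_isometry M (induced_sym \<phi>) \<longleftrightarrow> distr M M \<phi> = M"
proof
  assume iso: "L1_isometry M (induced_sym \<phi>)"
  interpret finite_measure M by fact
  interpret D: finite_measure "distr M M \<phi>" by (rule finite_measure_distr) auto
  show "distr M M \<phi> = M"
  proof (rule measure_eqI)
    fix A assume "A \<in> sets (distr M M \<phi>)"
    then have A: "A \<in> sets M" by simp
    then have "integrable M (indicator A :: 'a \<Rightarrow> real)"
      by (intro integrable_real_indicator) (auto simp: less_top[symmetric])
    then have "(\<integral>y. \<bar>indicator A (\<phi> y)\<bar> \<partial>M) = (\<integral>y. \<bar>indicator A y :: real\<bar> \<partial>M)"
      using iso unfolding L1_isometry_def induced_sym_def comp_def by blast
    then have "(\<integral>y. indicator A (\<phi> y) \<partial>M) = (\<integral>y. (indicator A y :: real) \<partial>M)"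
      by simp
    moreover have "(\<integral>y. indicator A (\<phi> y) \<partial>M) = (\<integral>y. (indicator A y :: real) \<partial>distr M M \<phi>)"
      using A by (intro integral_distr[symmetric]) auto
    ultimately show "emeasure (distr M M \<phi>) A = emeasure M A"
      using A by (simp add: D.emeasure_eq_measure emeasure_eq_measure sets.Int_space_eq2)
  qed simp
next
  assume preserving: "distr M M \<phi> = M"
  show "L1_isometry M (induced_sym \<phi>)"
    unfolding L1_isometry_def induced_sym_def comp_def
  proof (intro allI impI conjI)
    fix u :: "'a \<Rightarrow> real" assume u: "integrable M u"
    then have [measurable]: "u \<in> borel_measurable M" by auto
    show "integrable M (\<lambda>y. u (\<phi> y))"
      using u integrable_distr_eq[of \<phi> M M u] by (simp add: preserving)
    show "(\<integral>y. \<bar>u (\<phi> y)\<bar> \<partial>M) = (\<integral>y. \<bar>u y\<bar> \<partial>M)"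
      using integral_distr[of \<phi> M M "\<lambda>y. \<bar>u y\<bar>"] by (simp add: preserving)
  qed
qed

lemma graphon_aut_iff_measure_preserving_graphop_aut:
  assumes "graphon M W"
  shows "graphon_aut M W \<phi> \<longleftrightarrow> graphop_aut M (graphop_of M W) \<phi> \<and> distr M M \<phi> = M"
proof (cases "measurable_bijection M \<phi> \<and> distr M M \<phi> = M")
  case True
  then show ?thesis
    unfolding graphon_aut_def graphop_aut_def invertible_measure_preserving_iff
    by (simp add: graphop_distr_iff_AE_graphon[OF assms])
next
  case False
  then show ?thesis
    unfolding graphon_aut_def graphop_aut_def invertible_measure_preserving_iff by auto
qed

theorem lemma8p3:
  fixes M :: "'a measure" and W :: "'a \<Rightarrow> 'a \<Rightarrow> real"
  assumes "graphon M W"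
  shows "(\<forall>\<phi>. graphon_aut M W \<phi> \<longrightarrow> graphop_aut M (graphop_of M W) \<phi>)
    \<and> (\<forall>\<phi>. graphop_aut M (graphop_of M W) \<phi> \<longrightarrow> (graphon_aut M W \<phi> \<longleftrightarrow> distr M M \<phi> = M))
    \<and> {induced_sym \<phi> | \<phi>. graphon_aut M W \<phi>}
      = {induced_sym \<phi> | \<phi>. graphop_aut M (graphop_of M W) \<phi> \<and> L1_isometry M (induced_sym \<phi>)}"
proof -
  have "finite_measure M"
    using assms unfolding graphon_def prob_space_def by auto
  then have "L1_isometry M (induced_sym \<phi>) \<longleftrightarrow> distr M M \<phi> = M"
    if "graphop_aut M (graphop_of M W) \<phi>" for \<phi>
    using that L1_isometry_induced_sym_iff unfolding graphop_aut_def measurable_bijection_def by blast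
  then show ?thesis
    using graphon_aut_iff_measure_preserving_graphop_aut[OF assms] by blast
qed

end
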